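(* Let $X$ be a Banach space over $\mathbb R$ and let $\sum_n x_n$ be a series in $X$ which is not unconditionally convergent. Let $\mathcal I$ be an ideal on $\mathbb N$ with the Baire property. Then the set $$B(\mathcal I):=\left\{t \in \{-1,1\}^{\mathbb N} \colon \sum_n t(n)x_n \text{ is } \mathcal I\text{-convergent}\right\}$$ is meager in $\{-1,1\}^{\mathbb N}$ (with the product topology).
   Context: $\mathbb N=\{1,2,\dots\}$. An ideal on $\mathbb N$ is a family $\mathcal I\subset\mathcal P(\mathbb N)$ closed under finite unions and subsets, with $\mathbb N\notin\mathcal I$ and containing all finite subsets of $\mathbb N$. Identifying subsets of $\mathbb N$ with their characteristic functions, $\mathcal I$ is regarded as a subset of the Cantor space $\{0,1\}^{\mathbb N}$ (product topology), and "$\mathcal I$ has the Baire property" refers to this subset. A sequence $(y_n)$ in a normed space is $\mathcal I$-convergent to $y$ if $\{n:\|y_n-y\|>\varepsilon\}\in\mathcal I$ for every $\varepsilon>0$; a series is $\mathcal I$-convergent if its sequence of partial sums is $\mathcal I$-convergent to some element. A series $\sum_n x_n$ is unconditionally convergent if $\sum_n x_{p(n)}$ converges for every permutation $p$ of $\mathbb N$. *)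

theory Defs
  imports "HOL-Analysis.Analysis"
begin

text \<open>Ideals on the natural numbers (indexed from 0 here).\<close>
definition is_ideal :: "nat set set \<Rightarrow> bool" where
  "is_ideal \<I> \<longleftrightarrow>
     (\<forall>A\<in>\<I>. \<forall>B. B \<subseteq> A \<longrightarrow> B \<in> \<I>) \<and>
     (\<forall>A\<in>\<I>. \<forall>B\<in>\<I>. A \<union> B \<in> \<I>) \<and>
     UNIV \<notin> \<I> \<and>
     (\<forall>A. finite A \<longrightarrow> A \<in> \<I>)"

definition I_convergent_to :: "nat set set \<Rightarrow> (nat \<Rightarrow> 'a::real_normed_vector) \<Rightarrow> 'a \<Rightarrow> bool" where
  "I_convergent_to \<I> y L \<longleftrightarrow> (\<forall>\<epsilon>>0. {n. norm (y n - L) > \<epsilon>} \<in> \<I>)"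

definition I_convergent_series :: "nat set set \<Rightarrow> (nat \<Rightarrow> 'a::real_normed_vector) \<Rightarrow> bool" where
  "I_convergent_series \<I> x \<longleftrightarrow> (\<exists>L. I_convergent_to \<I> (\<lambda>n. \<Sum>k\<le>n. x k) L)"

definition unconditionally_convergent :: "(nat \<Rightarrow> 'a::real_normed_vector) \<Rightarrow> bool" where
  "unconditionally_convergent x \<longleftrightarrow> (\<forall>p. bij p \<longrightarrow> summable (\<lambda>n. x (p n)))"

definition nowhere_dense_in :: "'a topology \<Rightarrow> 'a set \<Rightarrow> bool" where
  "nowhere_dense_in T S \<longleftrightarrow> S \<subseteq> topspace T \<and> T interior_of (T closure_of S) = {}"

definition meager_in :: "'a topology \<Rightarrow> 'a set \<Rightarrow> bool" where
  "meager_in T S \<longleftrightarrow> S \<subseteq> topspace T \<and>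
     (\<exists>F. countable F \<and> (\<forall>N\<in>F. nowhere_dense_in T N) \<and> S \<subseteq> \<Union>F)"

definition has_Baire_property_in :: "'a topology \<Rightarrow> 'a set \<Rightarrow> bool" where
  "has_Baire_property_in T S \<longleftrightarrow> S \<subseteq> topspace T \<and>
     (\<exists>U. openin T U \<and> meager_in T ((S - U) \<union> (U - S)))"

text \<open>Cantor space {0,1}^N, with True = 1, and sets identified with characteristic functions.\<close>
definition cantor_space :: "(nat \<Rightarrow> bool) topology" where
  "cantor_space = product_topology (\<lambda>_. discrete_topology (UNIV :: bool set)) UNIV"

definition ideal_has_Baire_property :: "nat set set \<Rightarrow> bool" where
  "ideal_has_Baire_property \<I> \<longleftrightarrow> has_Baire_property_in cantor_space ((\<lambda>A n. n \<in> A) ` \<I>)"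

definition sign_space :: "(nat \<Rightarrow> real) topology" where
  "sign_space = product_topology (\<lambda>_. subtopology euclideanreal {-1, 1}) UNIV"

end

theory Submission
  imports Defs
begin

(*
  An ideal with the Baire property is meager in the Cantor space: flipping every coordinate
  beyond N is a homeomorphism that moves members of the ideal out of it, since a set and its
  flip together cover a cofinite set. By Talagrand's argument a meager hereditary family admits
  a partition of the naturals into finite intervals [a k, a (Suc k)) such that each member contains
  only finitely many of them. Hence if the partial sums of sum t(n) x(n) are I-convergent to L,
  then on every late interval some partial sum lies within eps/3 of L.

  Since the series is not unconditionally convergent, there are eps > 0 and signed blocks
  s(a) x(a) + ... + s(b) x(b) of norm > eps arbitrarily far out. For fixed K the sign sequences
  with the above property beyond K form a nowhere dense set: any cylinder can be extended so
  that for each of the finitely many partial sums v it fixes on one interval, some later interval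
  carries only partial sums at distance > eps from v. A far block with a suitable global sign
  moves the partial sum away from v, and choosing each later sign so that the distance to v does
  not decrease keeps it away; two partial sums within eps/3 of the same L would be 2 eps/3-close.
*)

section \<open>Nowhere dense and meager sets\<close>

lemma nowhere_dense_inI:
  assumes "S \<subseteq> topspace X"
    and "\<And>U. openin X U \<Longrightarrow> U \<noteq> {} \<Longrightarrow> \<exists>V. openin X V \<and> V \<noteq> {} \<and> V \<subseteq> U \<and> V \<inter> S = {}"
  shows "nowhere_dense_in X S"
  unfolding nowhere_dense_in_def interior_of_eq_empty
proof (intro conjI allI impI)
  show "S \<subseteq> topspace X"
    by (fact assms(1))
  fix U assume U: "openin X U \<and> U \<subseteq> X closure_of S"
  show "U = {}"
  proof (rule ccontr)
    assume "U \<noteq> {}"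
    then obtain V where V: "openin X V" "V \<noteq> {}" "V \<subseteq> U" "V \<inter> S = {}"
      using assms(2) U by meson
    then have "V \<inter> X closure_of S = {}"
      by (simp add: openin_Int_closure_of_eq_empty)
    then show False
      using V(2,3) U by blast
  qed
qed

lemma nowhere_dense_in_openin_Diff_closure:
  assumes "nowhere_dense_in X S" "openin X U" "U \<noteq> {}"
  shows "U - X closure_of S \<noteq> {}"
  using assms unfolding nowhere_dense_in_def interior_of_eq_empty by blast

lemma nowhere_dense_in_Union:
  assumes "finite \<F>" "\<And>S. S \<in> \<F> \<Longrightarrow> nowhere_dense_in X S"
  shows "nowhere_dense_in X (\<Union>\<F>)"
  using assms
proof (induction rule: finite_induct)
  case empty
  then show ?case
    by (simp add: nowhere_dense_in_def)
next
  case (insert S \<F>)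
  then show ?case
    by (simp add: nowhere_dense_in_def interior_of_union_eq_empty)
qed

lemma nowhere_dense_in_closure_of:
  "nowhere_dense_in X S \<Longrightarrow> nowhere_dense_in X (X closure_of S)"
  by (simp add: nowhere_dense_in_def closure_of_subset_topspace)

lemma nowhere_dense_in_homeomorphic_image:
  assumes f: "homeomorphic_map X X f" and S: "nowhere_dense_in X S"
  shows "nowhere_dense_in X (f ` S)"
proof -
  have "S \<subseteq> topspace X"
    using S by (simp add: nowhere_dense_in_def)
  then show ?thesis
    using S homeomorphic_imp_surjective_map[OF f]
    by (auto simp: nowhere_dense_in_def homeomorphic_map_closure_of[OF f]
        homeomorphic_map_interior_of[OF f closure_of_subset_topspace])
qed

lemma meager_in_subset:
  assumes "meager_in X S" "S' \<subseteq> S"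
  shows "meager_in X S'"
  using assms unfolding meager_in_def by (meson order_trans)

lemma meager_in_Un:
  assumes "meager_in X S" "meager_in X S'"
  shows "meager_in X (S \<union> S')"
proof -
  obtain \<F> \<F>' where "countable \<F>" "\<forall>N\<in>\<F>. nowhere_dense_in X N" "S \<subseteq> \<Union>\<F>"
    and "countable \<F>'" "\<forall>N\<in>\<F>'. nowhere_dense_in X N" "S' \<subseteq> \<Union>\<F>'"
    using assms unfolding meager_in_def by metis
  then show ?thesis
    using assms unfolding meager_in_def by (intro conjI exI[of _ "\<F> \<union> \<F>'"]) auto
qed

lemma meager_in_homeomorphic_image:
  assumes f: "homeomorphic_map X X f" and S: "meager_in X S"
  shows "meager_in X (f ` S)"
proof -
  obtain \<F> where \<F>: "countable \<F>" "\<forall>N\<in>\<F>. nowhere_dense_in X N" "S \<subseteq> \<Union>\<F>"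
    using S unfolding meager_in_def by blast
  have "f ` S \<subseteq> topspace X"
    using S homeomorphic_imp_surjective_map[OF f] by (auto simp: meager_in_def)
  moreover have "\<forall>N\<in>(\<lambda>N. f ` N) ` \<F>. nowhere_dense_in X N"
    using \<F>(2) nowhere_dense_in_homeomorphic_image[OF f] by blast
  moreover have "f ` S \<subseteq> \<Union>((\<lambda>N. f ` N) ` \<F>)"
    using \<F>(3) by blast
  ultimately show ?thesis
    unfolding meager_in_def using \<F>(1) by (intro conjI exI[of _ "(\<lambda>N. f ` N) ` \<F>"]) simp_all
qed

lemma openin_meager_in_empty:
  assumes "locally_compact_space X" "regular_space X" "openin X U" "meager_in X U"
  shows "U = {}"
proof -
  obtain \<F> where \<F>: "countable \<F>" "\<forall>N\<in>\<F>. nowhere_dense_in X N" "U \<subseteq> \<Union>\<F>"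
    using assms(4) unfolding meager_in_def by meson
  let ?\<G> = "(\<lambda>N. X closure_of N) ` \<F>"
  have "X interior_of \<Union>?\<G> = {}"
    using assms(1,2) \<F>(1,2) by (intro Baire_category_alt) (auto simp: nowhere_dense_in_def)
  moreover have "N \<subseteq> X closure_of N" if "N \<in> \<F>" for N
    using \<F>(2) that by (simp add: closure_of_subset nowhere_dense_in_def)
  then have "U \<subseteq> \<Union>?\<G>"
    using \<F>(3) by blast
  ultimately show ?thesis
    using interior_of_maximal[OF _ assms(3)] by (metis subset_empty)
qed

section \<open>Sequence spaces with discrete factors\<close>

abbreviation discrete_sequences :: "'b set \<Rightarrow> (nat \<Rightarrow> 'b) topology" where
  "discrete_sequences D \<equiv> product_topology (\<lambda>_. discrete_topology D) UNIV"

definition cylinder :: "'b set \<Rightarrow> (nat \<Rightarrow> 'b) \<Rightarrow> nat \<Rightarrow> (nat \<Rightarrow> 'b) set" where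
  "cylinder D p m = {t. (\<forall>n. t n \<in> D) \<and> (\<forall>n<m. t n = p n)}"

lemma topspace_discrete_sequences [simp]:
  "topspace (discrete_sequences D) = {t. \<forall>n. t n \<in> D}"
  by (auto simp: PiE_def extensional_def)

lemma openin_cylinder: "openin (discrete_sequences D) (cylinder D p m)"
  unfolding openin_product_topology_alt
proof (intro ballI)
  fix t assume t: "t \<in> cylinder D p m"
  define U where "U n = (if n < m then {p n} \<inter> D else D)" for n
  have "finite {n. U n \<noteq> D}"
    by (rule finite_subset[of _ "{..<m}"]) (auto simp: U_def)
  moreover have "Pi\<^sub>E UNIV U \<subseteq> cylinder D p m"
  proof
    fix y assume "y \<in> Pi\<^sub>E UNIV U"
    then have yU: "y n \<in> U n" for n
      by auto
    have "y n \<in> D" "n < m \<Longrightarrow> y n = p n" for n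
      using yU[of n] by (auto simp: U_def split: if_splits)
    then show "y \<in> cylinder D p m"
      by (simp add: cylinder_def)
  qed
  moreover have "t \<in> Pi\<^sub>E UNIV U"
    using t unfolding cylinder_def U_def by (auto simp: PiE_iff) metis
  ultimately show "\<exists>U. finite {i \<in> UNIV. U i \<noteq> topspace (discrete_topology D)} \<and>
      (\<forall>i\<in>UNIV. openin (discrete_topology D) (U i)) \<and>
      t \<in> Pi\<^sub>E UNIV U \<and> Pi\<^sub>E UNIV U \<subseteq> cylinder D p m"
    by (intro exI[of _ U]) (simp add: U_def)
qed

lemma cylinder_subset_openin:
  assumes "openin (discrete_sequences D) U" "t \<in> U"
  obtains m where "cylinder D t m \<subseteq> U"
proof -
  obtain V where V: "finite {n \<in> UNIV. V n \<noteq> D}" "t \<in> Pi\<^sub>E UNIV V" "Pi\<^sub>E UNIV V \<subseteq> U"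
    using assms unfolding openin_product_topology_alt topspace_discrete_topology by blast
  obtain m where m: "\<And>n. V n \<noteq> D \<Longrightarrow> n < m"
    using V(1) finite_nat_set_iff_bounded by auto
  have tV: "t n \<in> V n" for n
    using V(2) by (simp add: PiE_iff)
  have "cylinder D t m \<subseteq> Pi\<^sub>E UNIV V"
  proof
    fix y assume y: "y \<in> cylinder D t m"
    have "y n \<in> V n" for n
      using y m[of n] tV[of n] by (cases "V n = D") (auto simp: cylinder_def)
    then show "y \<in> Pi\<^sub>E UNIV V"
      by (simp add: PiE_UNIV_domain)
  qed
  with V(3) show thesis
    by (meson that order_trans)
qed

lemma cantor_space_eq: "cantor_space = discrete_sequences UNIV"
  by (simp add: cantor_space_def)

lemma sign_space_eq: "sign_space = discrete_sequences {-1, 1}"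
proof -
  have "subtopology euclideanreal {-1, 1} = discrete_topology {-1, 1}"
    by (rule subtopology_eq_discrete_topology_finite) (simp_all add: t1_space_euclidean)
  then show ?thesis
    by (simp add: sign_space_def)
qed

lemma topspace_cantor_space [simp]: "topspace cantor_space = UNIV"
  by (simp add: cantor_space_eq)

lemma openin_cantor_cylinder: "openin cantor_space (cylinder UNIV p m)"
  unfolding cantor_space_eq by (rule openin_cylinder)

lemma cantor_cylinder_subset_openin:
  assumes "openin cantor_space U" "t \<in> U"
  obtains m where "cylinder UNIV t m \<subseteq> U"
  using assms unfolding cantor_space_eq by (rule cylinder_subset_openin)

lemma cantor_space_locally_compact_regular:
  "locally_compact_space cantor_space \<and> regular_space cantor_space"
proof -
  have "compact_space cantor_space" "Hausdorff_space cantor_space"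
    by (simp_all add: cantor_space_def compact_space_product_topology
        compact_space_discrete_topology Hausdorff_space_product_topology)
  then show ?thesis
    using compact_imp_locally_compact_space locally_compact_Hausdorff_or_regular by blast
qed

lemma continuous_map_cantor_pointwise:
  "continuous_map cantor_space cantor_space (\<lambda>f n. g n (f n))"
  unfolding cantor_space_def continuous_map_componentwise_UNIV
proof
  fix n :: nat
  have "continuous_map (discrete_sequences UNIV) (discrete_topology UNIV) (\<lambda>f :: nat \<Rightarrow> bool. f n)"
    by (rule continuous_map_product_projection) simp
  then show "continuous_map (discrete_sequences UNIV) (discrete_topology UNIV) (\<lambda>f. g n (f n))"
    using continuous_map_compose[of _ _ "\<lambda>f. f n" _ "g n"] by (simp add: o_def)
qed

section \<open>Ideals with the Baire property\<close>

lemma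
  assumes "is_ideal \<I>"
  shows is_ideal_subset: "A \<in> \<I> \<Longrightarrow> B \<subseteq> A \<Longrightarrow> B \<in> \<I>"
    and is_ideal_Un: "A \<in> \<I> \<Longrightarrow> B \<in> \<I> \<Longrightarrow> A \<union> B \<in> \<I>"
    and is_ideal_finite: "finite A \<Longrightarrow> A \<in> \<I>"
    and is_ideal_UNIV: "UNIV \<notin> \<I>"
  using assms unfolding is_ideal_def by simp_all

definition flip_from :: "nat \<Rightarrow> (nat \<Rightarrow> bool) \<Rightarrow> nat \<Rightarrow> bool" where
  "flip_from N f n = (if n < N then f n else \<not> f n)"

lemma flip_from_flip_from [simp]: "flip_from N (flip_from N f) = f"
  by (simp add: flip_from_def fun_eq_iff)

lemma homeomorphic_map_flip_from: "homeomorphic_map cantor_space cantor_space (flip_from N)"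
proof (rule homeomorphic_map_involution)
  show "continuous_map cantor_space cantor_space (flip_from N)"
    using continuous_map_cantor_pointwise[of "\<lambda>n b. if n < N then b else \<not> b"]
    by (simp add: flip_from_def[abs_def])
qed simp

lemma flip_from_ideal_notin_ideal:
  assumes "is_ideal \<I>" "A \<in> \<I>" "B \<in> \<I>"
  shows "flip_from N (\<lambda>n. n \<in> A) \<noteq> (\<lambda>n. n \<in> B)"
proof
  assume flip: "flip_from N (\<lambda>n. n \<in> A) = (\<lambda>n. n \<in> B)"
  have "n \<in> A \<union> B \<union> {..<N}" for n
    using fun_cong[OF flip, of n] by (auto simp: flip_from_def split: if_splits)
  then have "A \<union> B \<union> {..<N} = UNIV"
    by blast
  moreover have "A \<union> B \<union> {..<N} \<in> \<I>"
    using is_ideal_Un[OF assms(1) is_ideal_Un[OF assms] is_ideal_finite[OF assms(1)]] by simp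
  ultimately show False
    using is_ideal_UNIV[OF assms(1)] by simp
qed

lemma cylinder_subset_flip_from_image:
  assumes "is_ideal \<I>"
  defines "J \<equiv> (\<lambda>A n. n \<in> A) ` \<I>"
  shows "cylinder UNIV y N \<subseteq> (cylinder UNIV y N - J) \<union> flip_from N ` (cylinder UNIV y N - J)"
proof
  fix f assume f: "f \<in> cylinder UNIV y N"
  have flip_f: "flip_from N f \<in> cylinder UNIV y N"
    using f by (simp add: cylinder_def flip_from_def)
  show "f \<in> (cylinder UNIV y N - J) \<union> flip_from N ` (cylinder UNIV y N - J)"
  proof (cases "f \<in> J")
    case True
    then have "flip_from N f \<notin> J"
      using flip_from_ideal_notin_ideal[OF assms(1)] by (auto simp: J_def)
    then have "flip_from N (flip_from N f) \<in> flip_from N ` (cylinder UNIV y N - J)"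
      using flip_f by blast
    then show ?thesis
      by simp
  qed (use f in blast)
qed

lemma ideal_meager_in_cantor_space:
  assumes \<I>: "is_ideal \<I>" and Baire: "ideal_has_Baire_property \<I>"
  shows "meager_in cantor_space ((\<lambda>A n. n \<in> A) ` \<I>)"
proof -
  let ?J = "(\<lambda>A n. n \<in> A) ` \<I>"
  obtain U where U: "openin cantor_space U" "meager_in cantor_space ((?J - U) \<union> (U - ?J))"
    using Baire unfolding ideal_has_Baire_property_def has_Baire_property_in_def by meson
  show ?thesis
  proof (cases "U = {}")
    case True
    then show ?thesis
      using U(2) by simp
  next
    case False
    then obtain y where "y \<in> U"
      by blast
    then obtain N where N: "cylinder UNIV y N \<subseteq> U"
      using U(1) cantor_cylinder_subset_openin by metis
    let ?Z = "cylinder UNIV y N"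
    have M: "meager_in cantor_space (?Z - ?J)"
      using U(2) by (rule meager_in_subset) (use N in blast)
    have "?Z \<subseteq> (?Z - ?J) \<union> flip_from N ` (?Z - ?J)"
      by (rule cylinder_subset_flip_from_image[OF \<I>])
    moreover have "meager_in cantor_space ((?Z - ?J) \<union> flip_from N ` (?Z - ?J))"
      using meager_in_Un[OF M meager_in_homeomorphic_image[OF homeomorphic_map_flip_from M]] .
    ultimately have "meager_in cantor_space ?Z"
      by (rule meager_in_subset[rotated])
    then have "?Z = {}"
      using openin_meager_in_empty openin_cantor_cylinder cantor_space_locally_compact_regular
      by metis
    moreover have "y \<in> ?Z"
      by (simp add: cylinder_def)
    ultimately show ?thesis
      by simp
  qed
qed

section \<open>Talagrand's characterization of meager ideals\<close>

definition avoiding_block :: "(nat \<Rightarrow> bool) set \<Rightarrow> nat \<Rightarrow> nat \<Rightarrow> bool" where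
  "avoiding_block G n m \<longleftrightarrow> n < m \<and> (\<forall>s. (\<forall>i\<ge>n. \<not> s i) \<longrightarrow>
     (\<exists>u. (\<forall>i. u i \<longrightarrow> n \<le> i \<and> i < m) \<and> cylinder UNIV (\<lambda>i. s i \<or> u i) m \<inter> G = {}))"

lemma avoiding_blockD:
  assumes "avoiding_block G n m" "\<forall>i\<ge>n. \<not> s i"
  obtains u where "\<And>i. u i \<Longrightarrow> n \<le> i \<and> i < m" "cylinder UNIV (\<lambda>i. s i \<or> u i) m \<inter> G = {}"
proof -
  have "\<exists>u. (\<forall>i. u i \<longrightarrow> n \<le> i \<and> i < m) \<and> cylinder UNIV (\<lambda>i. s i \<or> u i) m \<inter> G = {}"
    using assms(1)[unfolded avoiding_block_def, THEN conjunct2, rule_format,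
        OF assms(2)[rule_format]] .
  then show thesis
    using that by blast
qed

lemma cantor_cylinder_extension_avoiding:
  assumes "nowhere_dense_in cantor_space S"
  obtains q m' where "m \<le> m'" "\<forall>n<m. q n = p n" "cylinder UNIV q m' \<inter> S = {}"
proof -
  let ?U = "cylinder UNIV p m - cantor_space closure_of S"
  have "p \<in> cylinder UNIV p m"
    by (simp add: cylinder_def)
  then have "?U \<noteq> {}"
    using nowhere_dense_in_openin_Diff_closure[OF assms openin_cantor_cylinder] by blast
  then obtain q where q: "q \<in> ?U"
    by blast
  have "openin cantor_space ?U"
    by (intro openin_diff openin_cantor_cylinder closedin_closure_of)
  then obtain m2 where m2: "cylinder UNIV q m2 \<subseteq> ?U"
    using q cantor_cylinder_subset_openin by metis
  have "S \<subseteq> cantor_space closure_of S"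
    by (simp add: closure_of_subset)
  moreover have "cylinder UNIV q (max m m2) \<subseteq> cylinder UNIV q m2"
    by (auto simp: cylinder_def)
  ultimately have "cylinder UNIV q (max m m2) \<inter> S = {}"
    using m2 by blast
  moreover have "\<forall>n<m. q n = p n"
    using q by (simp add: cylinder_def)
  ultimately show thesis
    by (intro that[of "max m m2"]) simp_all
qed

lemma finite_patterns_below: "finite {s :: nat \<Rightarrow> bool. \<forall>i\<ge>n. \<not> s i}"
proof (rule finite_subset)
  show "{s :: nat \<Rightarrow> bool. \<forall>i\<ge>n. \<not> s i} \<subseteq> (\<lambda>A i. i \<in> A) ` Pow {..<n}"
  proof
    fix s :: "nat \<Rightarrow> bool" assume "s \<in> {s. \<forall>i\<ge>n. \<not> s i}"
    then have "{i. s i} \<in> Pow {..<n}"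
      using not_less by auto
    then show "s \<in> (\<lambda>A i. i \<in> A) ` Pow {..<n}"
      by (rule rev_image_eqI) simp
  qed
qed simp

lemma avoiding_block_exists:
  assumes "nowhere_dense_in cantor_space G"
  obtains m where "avoiding_block G n m"
proof -
  let ?P = "{s :: nat \<Rightarrow> bool. \<forall>i\<ge>n. \<not> s i}"
  have "\<exists>m' q. n \<le> m' \<and> (\<forall>i<n. q i = s i) \<and> cylinder UNIV q m' \<inter> G = {}" for s
    using cantor_cylinder_extension_avoiding[OF assms, of n s] by metis
  then obtain m' q where ext: "\<And>s. n \<le> m' s" "\<And>s. \<forall>i<n. q s i = s i"
    "\<And>s. cylinder UNIV (q s) (m' s) \<inter> G = {}"
    by metis
  define M where "M = Suc (Max (insert n (m' ` ?P)))"
  have fin: "finite (insert n (m' ` ?P))"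
    using finite_patterns_below by simp
  have "n < M"
    using Max_ge[OF fin, of n] by (simp add: M_def)
  moreover have "\<exists>u. (\<forall>i. u i \<longrightarrow> n \<le> i \<and> i < M) \<and> cylinder UNIV (\<lambda>i. s i \<or> u i) M \<inter> G = {}"
    if s: "\<forall>i\<ge>n. \<not> s i" for s
  proof (intro exI conjI)
    define u where "u i = (n \<le> i \<and> i < M \<and> q s i)" for i
    show "\<forall>i. u i \<longrightarrow> n \<le> i \<and> i < M"
      by (simp add: u_def)
    have "m' s < M"
      using s Max_ge[OF fin, of "m' s"] by (simp add: M_def)
    then have "s i \<or> u i \<longleftrightarrow> q s i" if "i < m' s" for i
      using that s ext(2)[of s] by (cases "i < n") (auto simp: u_def)
    then have "cylinder UNIV (\<lambda>i. s i \<or> u i) M \<subseteq> cylinder UNIV (q s) (m' s)"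
      using \<open>m' s < M\<close> by (auto simp: cylinder_def)
    then show "cylinder UNIV (\<lambda>i. s i \<or> u i) M \<inter> G = {}"
      using ext(3)[of s] by blast
  qed
  ultimately show thesis
    by (intro that[of M]) (simp add: avoiding_block_def)
qed

lemma restriction_preimage_interior_empty:
  assumes avoid: "\<And>k. avoiding_block (G k) (a k) (a (Suc k))"
    and "mono G" "strict_mono a"
    and inf: "infinite {k. {a k..<a (Suc k)} \<subseteq> A}"
  shows "cantor_space interior_of {f. (\<lambda>n. f n \<and> n \<in> A) \<in> G k} = {}"
  unfolding interior_of_eq_empty
proof (intro allI impI)
  fix W assume W: "openin cantor_space W \<and> W \<subseteq> {f. (\<lambda>n. f n \<and> n \<in> A) \<in> G k}"
  show "W = {}"
  proof (rule ccontr)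
    assume "W \<noteq> {}"
    then obtain z where "z \<in> W"
      by blast
    then obtain m where m: "cylinder UNIV z m \<subseteq> W"
      using W cantor_cylinder_subset_openin by metis
    have "\<exists>k'\<ge>max k m. k' \<in> {k. {a k..<a (Suc k)} \<subseteq> A}"
      using inf unfolding infinite_nat_iff_unbounded_le by (rule spec)
    then obtain k' where k': "max k m \<le> k'" "{a k'..<a (Suc k')} \<subseteq> A"
      by auto
    have "m \<le> a k'"
      using k'(1) seq_suble[OF \<open>strict_mono a\<close>, of k'] by simp
    define s where "s i = (i < m \<and> z i \<and> i \<in> A)" for i
    have "\<forall>i\<ge>a k'. \<not> s i"
      using \<open>m \<le> a k'\<close> by (simp add: s_def)
    then obtain u where u: "\<And>i. u i \<Longrightarrow> a k' \<le> i \<and> i < a (Suc k')"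
      and disj: "cylinder UNIV (\<lambda>i. s i \<or> u i) (a (Suc k')) \<inter> G k' = {}"
      using avoiding_blockD[OF avoid] by metis
    define f where "f i = (if i < m then z i else u i)" for i
    have "f \<in> W"
      using m by (auto simp: cylinder_def f_def)
    then have "(\<lambda>n. f n \<and> n \<in> A) \<in> G k'"
      using W monoD[OF \<open>mono G\<close>, of k k'] k'(1) by auto
    moreover have "f i \<and> i \<in> A \<longleftrightarrow> s i \<or> u i" for i
      using u[of i] k'(2) \<open>m \<le> a k'\<close> by (auto simp: f_def s_def)
    then have "(\<lambda>n. f n \<and> n \<in> A) \<in> cylinder UNIV (\<lambda>i. s i \<or> u i) (a (Suc k'))"
      by (simp add: cylinder_def)
    ultimately show False
      using disj by blast
  qed
qed

lemma finite_intervals_in_member: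
  assumes hereditary: "\<And>A B. A \<in> \<I> \<Longrightarrow> B \<subseteq> A \<Longrightarrow> B \<in> \<I>"
    and cover: "(\<lambda>A n. n \<in> A) ` \<I> \<subseteq> (\<Union>k. G k)"
    and closed: "\<And>k. closedin cantor_space (G k)" and "mono G"
    and avoid: "\<And>k. avoiding_block (G k) (a k) (a (Suc k))" and "strict_mono a"
    and "A \<in> \<I>"
  shows "finite {k. {a k..<a (Suc k)} \<subseteq> A}"
proof (rule ccontr)
  assume inf: "infinite {k. {a k..<a (Suc k)} \<subseteq> A}"
  define H where "H k = {f. (\<lambda>n. f n \<and> n \<in> A) \<in> G k}" for k
  have "closedin cantor_space (H k)" for k
    using closedin_continuous_map_preimage[OF continuous_map_cantor_pointwise closed]
    by (simp add: H_def)
  moreover have "cantor_space interior_of H k = {}" for k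
    using restriction_preimage_interior_empty[OF avoid \<open>mono G\<close> \<open>strict_mono a\<close> inf]
    by (simp add: H_def)
  ultimately have "cantor_space interior_of \<Union>(range H) = {}"
    using cantor_space_locally_compact_regular by (intro Baire_category_alt) auto
  moreover have "f \<in> \<Union>(range H)" for f
  proof -
    have "{n. f n \<and> n \<in> A} \<in> \<I>"
      by (rule hereditary[OF \<open>A \<in> \<I>\<close>]) blast
    then have "(\<lambda>n. n \<in> {n. f n \<and> n \<in> A}) \<in> (\<Union>k. G k)"
      by (rule subsetD[OF cover imageI])
    then show ?thesis
      by (simp add: H_def)
  qed
  then have "\<Union>(range H) = UNIV"
    by blast
  ultimately show False
    using interior_of_topspace[of cantor_space] by simp
qed

lemma meager_hereditary_interval_partition:
  assumes hereditary: "\<And>A B. A \<in> \<I> \<Longrightarrow> B \<subseteq> A \<Longrightarrow> B \<in> \<I>"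
    and meager: "meager_in cantor_space ((\<lambda>A n. n \<in> A) ` \<I>)"
  obtains a where "strict_mono a" "\<And>A. A \<in> \<I> \<Longrightarrow> finite {k. {a k..<a (Suc k)} \<subseteq> A}"
proof -
  obtain \<F> where \<F>: "countable \<F>" "\<forall>N\<in>\<F>. nowhere_dense_in cantor_space N"
    "(\<lambda>A n. n \<in> A) ` \<I> \<subseteq> \<Union>\<F>"
    using meager unfolding meager_in_def by meson
  define T where "T = from_nat_into (insert {} \<F>)"
  have \<F>T: "\<F> \<subseteq> range T"
    unfolding T_def using \<F>(1) by (subst range_from_nat_into) auto
  have T_nd: "nowhere_dense_in cantor_space (T j)" for j
    using from_nat_into[of "insert {} \<F>" j] \<F>(2) by (auto simp: T_def nowhere_dense_in_def)
  define G where "G k = cantor_space closure_of (\<Union>j\<le>k. T j)" for k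
  have G_nd: "nowhere_dense_in cantor_space (G k)" for k
    unfolding G_def by (intro nowhere_dense_in_closure_of nowhere_dense_in_Union) (auto simp: T_nd)
  have "mono G"
    unfolding G_def by (intro monoI closure_of_mono UN_mono) auto
  have "T j \<subseteq> G j" for j
    unfolding G_def by (rule order_trans[OF _ closure_of_subset]) auto
  then have "\<Union>(range T) \<subseteq> (\<Union>k. G k)"
    by (intro UN_mono) simp_all
  then have cover: "(\<lambda>A n. n \<in> A) ` \<I> \<subseteq> (\<Union>k. G k)"
    using \<F>(3) Union_mono[OF \<F>T] by (meson order_trans)
  have "\<exists>a. \<forall>k. True \<and> avoiding_block (G k) (a k) (a (Suc k))"
    by (rule dependent_nat_choice) (auto intro: avoiding_block_exists[OF G_nd])
  then obtain a where avoid: "\<And>k. avoiding_block (G k) (a k) (a (Suc k))"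
    by blast
  have "strict_mono a"
    using avoid by (simp add: strict_mono_Suc_iff avoiding_block_def)
  moreover have "finite {k. {a k..<a (Suc k)} \<subseteq> A}" if "A \<in> \<I>" for A
    using finite_intervals_in_member[OF hereditary cover _ \<open>mono G\<close> avoid \<open>strict_mono a\<close> that]
    by (simp add: G_def)
  ultimately show thesis
    by (rule that)
qed

section \<open>Signed partial sums\<close>

definition large_sign_blocks :: "(nat \<Rightarrow> 'a::real_normed_vector) \<Rightarrow> real \<Rightarrow> bool" where
  "large_sign_blocks x \<epsilon> \<longleftrightarrow> (\<forall>N. \<exists>a b s. N \<le> a \<and> a \<le> b \<and> (\<forall>n. s n \<in> {-1, 1::real}) \<and>
     \<epsilon> < norm (\<Sum>n\<in>{a..b}. s n *\<^sub>R x n))"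

lemma norm_sum_le_if_sign_sums_le:
  fixes x :: "nat \<Rightarrow> 'a::real_normed_vector"
  assumes small: "\<And>s b. N \<le> b \<Longrightarrow> \<forall>n. s n \<in> {-1, 1::real} \<Longrightarrow> norm (\<Sum>n\<in>{N..b}. s n *\<^sub>R x n) \<le> e"
    and F: "finite F" "F \<subseteq> {N..}" "F \<noteq> {}"
  shows "norm (\<Sum>n\<in>F. x n) \<le> e"
proof -
  define b where "b = Max F"
  have Fb: "F \<subseteq> {N..b}" and "N \<le> b"
    using F Max_ge Max_in by (fastforce simp: b_def)+
  define s where "s n = (if n \<in> F then 1 else -1 :: real)" for n
  have "(\<Sum>n\<in>{N..b}. 1 *\<^sub>R x n) + (\<Sum>n\<in>{N..b}. s n *\<^sub>R x n) =
      (\<Sum>n\<in>{N..b}. if n \<in> F then 2 *\<^sub>R x n else 0)"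
    unfolding sum.distrib[symmetric] by (rule sum.cong) (auto simp: s_def scaleR_2)
  also have "\<dots> = 2 *\<^sub>R (\<Sum>n\<in>F. x n)"
    using Fb by (simp add: sum.If_cases scaleR_sum_right Int_absorb1)
  finally have eq: "2 *\<^sub>R (\<Sum>n\<in>F. x n) = (\<Sum>n\<in>{N..b}. 1 *\<^sub>R x n) + (\<Sum>n\<in>{N..b}. s n *\<^sub>R x n)" ..
  have "norm (\<Sum>n\<in>{N..b}. 1 *\<^sub>R x n) \<le> e"
    using small[of b "\<lambda>_. 1"] \<open>N \<le> b\<close> by simp
  moreover have "norm (\<Sum>n\<in>{N..b}. s n *\<^sub>R x n) \<le> e"
    using small[of b s] \<open>N \<le> b\<close> by (simp add: s_def)
  ultimately have "norm (2 *\<^sub>R (\<Sum>n\<in>F. x n)) \<le> e + e"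
    unfolding eq by (rule order_trans[OF norm_triangle_ineq add_mono])
  then show ?thesis
    by simp
qed

lemma unconditionally_convergentI:
  fixes x :: "nat \<Rightarrow> 'a::banach"
  assumes tails: "\<And>e. e > 0 \<Longrightarrow> \<exists>N. \<forall>F. finite F \<longrightarrow> F \<subseteq> {N..} \<longrightarrow> norm (\<Sum>n\<in>F. x n) \<le> e"
  shows "unconditionally_convergent x"
  unfolding unconditionally_convergent_def
proof (intro allI impI)
  fix p :: "nat \<Rightarrow> nat" assume p: "bij p"
  show "summable (\<lambda>n. x (p n))"
    unfolding summable_Cauchy
  proof (intro allI impI)
    fix e :: real assume "e > 0"
    then obtain N where N: "\<And>F. finite F \<Longrightarrow> F \<subseteq> {N..} \<Longrightarrow> norm (\<Sum>n\<in>F. x n) \<le> e / 2"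
      using tails[of "e / 2"] by auto
    have "finite (p -` {..<N})"
      using p by (intro finite_vimageI) (simp_all add: bij_is_inj)
    then obtain M where M: "\<forall>k\<in>p -` {..<N}. k < M"
      unfolding finite_nat_set_iff_bounded by blast
    have "norm (\<Sum>k\<in>{m..<n}. x (p k)) < e" if "M \<le> m" for m n
    proof -
      have "(\<Sum>k\<in>{m..<n}. x (p k)) = (\<Sum>j\<in>p ` {m..<n}. x j)"
        by (simp add: sum.reindex[OF inj_on_subset[OF bij_is_inj[OF p] subset_UNIV]])
      moreover have "p ` {m..<n} \<subseteq> {N..}"
      proof
        fix j assume "j \<in> p ` {m..<n}"
        then obtain k where "j = p k" "M \<le> k"
          using \<open>M \<le> m\<close> by (auto intro: order_trans)
        then show "j \<in> {N..}"
          using M by (auto simp: not_less[symmetric])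
      qed
      ultimately show ?thesis
        using N[of "p ` {m..<n}"] \<open>e > 0\<close> by simp
    qed
    then show "\<exists>M. \<forall>m\<ge>M. \<forall>n. norm (\<Sum>k\<in>{m..<n}. x (p k)) < e"
      by blast
  qed
qed

lemma large_sign_blocks_if_not_unconditionally_convergent:
  fixes x :: "nat \<Rightarrow> 'a::banach"
  assumes "\<not> unconditionally_convergent x"
  obtains \<epsilon> where "\<epsilon> > 0" "large_sign_blocks x \<epsilon>"
proof (rule ccontr)
  assume no_blocks: "\<not> thesis"
  have "unconditionally_convergent x"
  proof (rule unconditionally_convergentI)
    fix e :: real assume "e > 0"
    then have "\<not> large_sign_blocks x e"
      using no_blocks that by blast
    then obtain N where N: "\<And>a b s. N \<le> a \<Longrightarrow> a \<le> b \<Longrightarrow> \<forall>n. s n \<in> {-1, 1::real} \<Longrightarrow>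
        norm (\<Sum>n\<in>{a..b}. s n *\<^sub>R x n) \<le> e"
      unfolding large_sign_blocks_def by (meson not_le)
    have "norm (\<Sum>n\<in>F. x n) \<le> e" if "finite F" "F \<subseteq> {N..}" for F
      using norm_sum_le_if_sign_sums_le[OF N[OF order_refl] that] \<open>e > 0\<close>
      by (cases "F = {}") simp_all
    then show "\<exists>N. \<forall>F. finite F \<longrightarrow> F \<subseteq> {N..} \<longrightarrow> norm (\<Sum>n\<in>F. x n) \<le> e"
      by blast
  qed
  with assms show False
    by simp
qed

definition partial_sum :: "(nat \<Rightarrow> 'a::real_normed_vector) \<Rightarrow> (nat \<Rightarrow> real) \<Rightarrow> nat \<Rightarrow> 'a" where
  "partial_sum x t n = (\<Sum>k\<le>n. t k *\<^sub>R x k)"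

lemma partial_sum_cong: "(\<And>k. k \<le> n \<Longrightarrow> t k = t' k) \<Longrightarrow> partial_sum x t n = partial_sum x t' n"
  unfolding partial_sum_def by (rule sum.cong) simp_all

lemma norm_le_max_add_diff:
  fixes u w :: "'a::real_normed_vector"
  shows "norm u \<le> max (norm (u + w)) (norm (u - w))"
proof -
  have "2 *\<^sub>R u = (u + w) + (u - w)"
    by (simp add: scaleR_2)
  then have "2 * norm u \<le> norm (u + w) + norm (u - w)"
    by (metis norm_scaleR norm_triangle_ineq abs_numeral)
  then show ?thesis
    by linarith
qed

lemma sign_far_from:
  fixes w :: "'a::real_normed_vector"
  assumes "\<epsilon> < norm w"
  obtains \<sigma> :: real where "\<sigma> \<in> {-1, 1}" "\<epsilon> < norm (c + \<sigma> *\<^sub>R w - v)"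
proof -
  have "norm (w + (v - c)) = norm (c - w - v)"
    using norm_minus_cancel[of "c - w - v"] by (simp add: algebra_simps)
  then have "norm w \<le> max (norm (c + w - v)) (norm (c - w - v))"
    using norm_le_max_add_diff[of w "v - c"] by (simp add: algebra_simps)
  then have "\<epsilon> < norm (c + 1 *\<^sub>R w - v) \<or> \<epsilon> < norm (c + (-1) *\<^sub>R w - v)"
    using assms by auto
  then show thesis
    using that by blast
qed

lemma greedy_signs:
  fixes y :: "nat \<Rightarrow> 'a::real_normed_vector"
  obtains \<sigma> where "\<And>j. \<sigma> j \<in> {-1, 1}" "\<And>n. norm (c - v) \<le> norm (c + (\<Sum>j<n. \<sigma> j *\<^sub>R y j) - v)"
proof -
  define p where
    "p = rec_nat c (\<lambda>j q. if norm (q - y j - v) \<le> norm (q + y j - v) then q + y j else q - y j)"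
  define \<sigma> where
    "\<sigma> j = (if norm (p j - y j - v) \<le> norm (p j + y j - v) then 1 else -1 :: real)" for j
  have p_Suc: "p (Suc j) = p j + \<sigma> j *\<^sub>R y j" for j
    by (simp add: p_def \<sigma>_def)
  have dist_mono: "norm (c - v) \<le> norm (p n - v)" for n
  proof (induction n)
    case 0
    then show ?case
      by (simp add: p_def)
  next
    case (Suc j)
    have "norm (p j - v) \<le> max (norm (p j + y j - v)) (norm (p j - y j - v))"
      using norm_le_max_add_diff[of "p j - v" "y j"] by (simp add: algebra_simps)
    then have "norm (p j - v) \<le> norm (p (Suc j) - v)"
      by (auto simp: p_Suc \<sigma>_def)
    with Suc.IH show ?case
      by linarith
  qed
  have p_eq: "p n = c + (\<Sum>j<n. \<sigma> j *\<^sub>R y j)" for n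
    by (induction n) (simp_all add: p_Suc, simp add: p_def)
  show thesis
  proof (rule that)
    show "\<sigma> j \<in> {-1, 1}" for j
      by (simp add: \<sigma>_def)
    show "norm (c - v) \<le> norm (c + (\<Sum>j<n. \<sigma> j *\<^sub>R y j) - v)" for n
      using dist_mono[of n] by (simp only: p_eq)
  qed
qed

lemma escape_from_point:
  fixes x :: "nat \<Rightarrow> 'a::real_normed_vector"
  assumes blocks: "large_sign_blocks x \<epsilon>" and q: "\<forall>n. q n \<in> {-1, 1::real}"
  obtains q' b where "m \<le> b" "\<forall>n. q' n \<in> {-1, 1::real}" "\<forall>n<m. q' n = q n"
    "\<And>n. b \<le> n \<Longrightarrow> \<epsilon> < norm (partial_sum x q' n - v)"
proof -
  obtain a b s where ab: "m \<le> a" "a \<le> b" and s: "\<forall>n. s n \<in> {-1, 1::real}"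
    and big: "\<epsilon> < norm (\<Sum>n\<in>{a..b}. s n *\<^sub>R x n)"
    using blocks unfolding large_sign_blocks_def by meson
  define c where "c = (\<Sum>n<a. q n *\<^sub>R x n)"
  define w where "w = (\<Sum>n\<in>{a..b}. s n *\<^sub>R x n)"
  obtain \<sigma> :: real where \<sigma>: "\<sigma> \<in> {-1, 1}" "\<epsilon> < norm (c + \<sigma> *\<^sub>R w - v)"
    using sign_far_from[of \<epsilon> w] big unfolding w_def by metis
  obtain \<tau> where \<tau>: "\<And>j. \<tau> j \<in> {-1, 1}"
    "\<And>n. norm (c + \<sigma> *\<^sub>R w - v) \<le> norm (c + \<sigma> *\<^sub>R w + (\<Sum>j<n. \<tau> j *\<^sub>R x (Suc b + j)) - v)"
    using greedy_signs by metis
  define q' where "q' n = (if n < a then q n else if n \<le> b then \<sigma> * s n else \<tau> (n - Suc b))" for n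
  have "partial_sum x q' (b + j) = c + \<sigma> *\<^sub>R w + (\<Sum>i<j. \<tau> i *\<^sub>R x (Suc b + i))" for j
  proof (induction j)
    case 0
    have "{..b} = {..<a} \<union> {a..b}"
      using ab by auto
    then have "partial_sum x q' b = (\<Sum>n<a. q' n *\<^sub>R x n) + (\<Sum>n\<in>{a..b}. q' n *\<^sub>R x n)"
      unfolding partial_sum_def by (simp add: sum.union_disjoint ivl_disj_int)
    also have "(\<Sum>n<a. q' n *\<^sub>R x n) = c"
      unfolding c_def by (rule sum.cong) (simp_all add: q'_def)
    also have "(\<Sum>n\<in>{a..b}. q' n *\<^sub>R x n) = \<sigma> *\<^sub>R w"
      unfolding w_def scaleR_sum_right by (rule sum.cong) (auto simp: q'_def)
    finally show ?case
      by simp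
  next
    case (Suc j)
    then show ?case
      using ab by (simp add: partial_sum_def q'_def)
  qed
  then have "\<epsilon> < norm (partial_sum x q' n - v)" if "b \<le> n" for n
    using \<tau>(2)[of "n - b"] \<sigma>(2) that by (metis le_add_diff_inverse order_less_le_trans)
  moreover have "\<forall>n. q' n \<in> {-1, 1::real}"
    using q s \<sigma>(1) \<tau>(1) by (auto simp: q'_def)
  moreover have "\<forall>n<m. q' n = q n"
    using ab by (simp add: q'_def)
  ultimately show thesis
    using ab by (intro that[of b q']) auto
qed

lemma escape_from_finite_set:
  fixes x :: "nat \<Rightarrow> 'a::real_normed_vector"
  assumes blocks: "large_sign_blocks x \<epsilon>" and a: "strict_mono a"
    and "finite V" and q: "\<forall>n. q n \<in> {-1, 1::real}"
  shows "\<exists>q' m'. m \<le> m' \<and> (\<forall>n. q' n \<in> {-1, 1::real}) \<and> (\<forall>n<m. q' n = q n) \<and>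
    (\<forall>v\<in>V. \<exists>l\<ge>K. a (Suc l) \<le> m' \<and> (\<forall>n\<in>{a l..<a (Suc l)}. \<epsilon> < norm (partial_sum x q' n - v)))"
  using \<open>finite V\<close> q
proof (induction V arbitrary: q m rule: finite_induct)
  case empty
  then show ?case
    by blast
next
  case (insert v V)
  obtain b q1 where q1: "m \<le> b" "\<forall>n. q1 n \<in> {-1, 1::real}" "\<forall>n<m. q1 n = q n"
    "\<And>n. b \<le> n \<Longrightarrow> \<epsilon> < norm (partial_sum x q1 n - v)"
    using escape_from_point[OF blocks insert.prems] by metis
  define l where "l = max b K"
  have "b \<le> a l"
    using seq_suble[OF a, of l] by (simp add: l_def)
  obtain q2 m2 where q2: "a (Suc l) \<le> m2" "\<forall>n. q2 n \<in> {-1, 1::real}" "\<forall>n<a (Suc l). q2 n = q1 n"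
    "\<forall>v\<in>V. \<exists>l\<ge>K. a (Suc l) \<le> m2 \<and> (\<forall>n\<in>{a l..<a (Suc l)}. \<epsilon> < norm (partial_sum x q2 n - v))"
    using insert.IH[OF q1(2), of "a (Suc l)"] by metis
  have "a l < a (Suc l)"
    using a by (simp add: strict_mono_def)
  have "\<epsilon> < norm (partial_sum x q2 n - v)" if "n \<in> {a l..<a (Suc l)}" for n
  proof -
    have "partial_sum x q2 n = partial_sum x q1 n"
      using that q2(3) by (intro partial_sum_cong) simp
    then show ?thesis
      using that q1(4) \<open>b \<le> a l\<close> by simp
  qed
  then have "\<exists>l\<ge>K. a (Suc l) \<le> m2 \<and> (\<forall>n\<in>{a l..<a (Suc l)}. \<epsilon> < norm (partial_sum x q2 n - v))"
    using q2(1) by (intro exI[of _ l]) (simp add: l_def)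
  moreover have "m \<le> m2" "\<forall>n<m. q2 n = q n"
    using q1(1,3) q2(1,3) \<open>b \<le> a l\<close> \<open>a l < a (Suc l)\<close> by auto
  ultimately show ?case
    using q2(2,4) by (intro exI[of _ q2] exI[of _ m2]) simp
qed

definition close_on_intervals ::
    "(nat \<Rightarrow> 'a::real_normed_vector) \<Rightarrow> (nat \<Rightarrow> nat) \<Rightarrow> real \<Rightarrow> nat \<Rightarrow> (nat \<Rightarrow> real) set" where
  "close_on_intervals x a \<delta> K =
     {t. \<exists>L. \<forall>k\<ge>K. \<exists>n\<in>{a k..<a (Suc k)}. norm (partial_sum x t n - L) \<le> \<delta>}"

lemma I_convergent_series_close_on_intervals:
  fixes x :: "nat \<Rightarrow> 'a::real_normed_vector"
  assumes "I_convergent_series \<I> (\<lambda>n. t n *\<^sub>R x n)" "\<delta> > 0"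
    and intervals: "\<And>A. A \<in> \<I> \<Longrightarrow> finite {k. {a k..<a (Suc k)} \<subseteq> A}"
  obtains K where "t \<in> close_on_intervals x a \<delta> K"
proof -
  obtain L where "I_convergent_to \<I> (partial_sum x t) L"
    using assms(1) by (auto simp: I_convergent_series_def partial_sum_def[abs_def])
  then have "{n. norm (partial_sum x t n - L) > \<delta>} \<in> \<I>"
    using \<open>\<delta> > 0\<close> by (simp add: I_convergent_to_def)
  then have "finite {k. {a k..<a (Suc k)} \<subseteq> {n. norm (partial_sum x t n - L) > \<delta>}}"
    by (rule intervals)
  then obtain K where K: "\<forall>k\<in>{k. {a k..<a (Suc k)} \<subseteq> {n. norm (partial_sum x t n - L) > \<delta>}}. k < K"
    unfolding finite_nat_set_iff_bounded by blast
  have "\<exists>n\<in>{a k..<a (Suc k)}. norm (partial_sum x t n - L) \<le> \<delta>" if "K \<le> k" for k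
    using K that by (force simp: not_less)
  then show thesis
    by (intro that[of K]) (auto simp: close_on_intervals_def)
qed

lemma not_close_on_intervals:
  assumes "0 \<le> \<epsilon>" "K \<le> k"
    and far: "\<And>n. n \<in> {a k..<a (Suc k)} \<Longrightarrow>
      \<exists>l\<ge>K. \<forall>n'\<in>{a l..<a (Suc l)}. \<epsilon> < norm (partial_sum x t n' - partial_sum x t n)"
  shows "t \<notin> close_on_intervals x a (\<epsilon> / 3) K"
proof
  assume "t \<in> close_on_intervals x a (\<epsilon> / 3) K"
  then obtain L where L: "\<forall>k\<ge>K. \<exists>n\<in>{a k..<a (Suc k)}. norm (partial_sum x t n - L) \<le> \<epsilon> / 3"
    by (auto simp: close_on_intervals_def)
  obtain n where n: "n \<in> {a k..<a (Suc k)}" "norm (partial_sum x t n - L) \<le> \<epsilon> / 3"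
    using L \<open>K \<le> k\<close> by blast
  obtain l where "K \<le> l"
    and l: "\<forall>n'\<in>{a l..<a (Suc l)}. \<epsilon> < norm (partial_sum x t n' - partial_sum x t n)"
    using far[OF n(1)] by blast
  obtain n' where n': "n' \<in> {a l..<a (Suc l)}" "norm (partial_sum x t n' - L) \<le> \<epsilon> / 3"
    using L \<open>K \<le> l\<close> by blast
  have "\<epsilon> < norm (partial_sum x t n' - partial_sum x t n)"
    using l n'(1) by blast
  also have "\<dots> \<le> \<epsilon> / 3 + \<epsilon> / 3"
    using n(2) n'(2) by (metis norm_diff_triangle_le norm_minus_commute)
  finally show False
    using \<open>0 \<le> \<epsilon>\<close> by simp
qed

lemma nowhere_dense_close_on_intervals:
  fixes x :: "nat \<Rightarrow> 'a::real_normed_vector"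
  assumes blocks: "large_sign_blocks x \<epsilon>" and "0 \<le> \<epsilon>" and a: "strict_mono a"
  shows "nowhere_dense_in sign_space (topspace sign_space \<inter> close_on_intervals x a (\<epsilon> / 3) K)"
    (is "nowhere_dense_in _ ?C")
proof (rule nowhere_dense_inI)
  show "?C \<subseteq> topspace sign_space"
    by blast
  fix U assume U: "openin sign_space U" "U \<noteq> {}"
  then obtain y where y: "y \<in> U"
    by blast
  obtain N where N: "cylinder {-1, 1} y N \<subseteq> U"
    using U(1) y cylinder_subset_openin unfolding sign_space_eq by metis
  have y_signs: "\<forall>n. y n \<in> {-1, 1::real}"
    using y openin_subset[OF U(1)] by (auto simp: sign_space_eq)
  define k where "k = max K N"
  have "K \<le> k" "N \<le> a k"
    using seq_suble[OF a, of k] by (simp_all add: k_def)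
  let ?V = "partial_sum x y ` {a k..<a (Suc k)}"
  obtain q' m' where Q: "a (Suc k) \<le> m'" "\<forall>n. q' n \<in> {-1, 1::real}" "\<forall>n<a (Suc k). q' n = y n"
    "\<forall>v\<in>?V. \<exists>l\<ge>K. a (Suc l) \<le> m' \<and> (\<forall>n\<in>{a l..<a (Suc l)}. \<epsilon> < norm (partial_sum x q' n - v))"
    using escape_from_finite_set[OF blocks a finite_imageI[OF finite_atLeastLessThan] y_signs]
    by metis
  have "a k < a (Suc k)"
    using a by (simp add: strict_mono_def)
  let ?W = "cylinder {-1, 1} q' m'"
  have "?W \<subseteq> U"
    using N Q(1,3) \<open>N \<le> a k\<close> \<open>a k < a (Suc k)\<close> by (auto simp: cylinder_def)
  moreover have "q' \<in> ?W"
    using Q(2) by (simp add: cylinder_def)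
  moreover have "t \<notin> close_on_intervals x a (\<epsilon> / 3) K" if t: "t \<in> ?W" for t
  proof (rule not_close_on_intervals[OF \<open>0 \<le> \<epsilon>\<close> \<open>K \<le> k\<close>])
    fix n assume n: "n \<in> {a k..<a (Suc k)}"
    have "partial_sum x t n = partial_sum x y n"
      using t n Q(1,3) by (intro partial_sum_cong) (auto simp: cylinder_def)
    then obtain l where l: "K \<le> l" "a (Suc l) \<le> m'"
      "\<forall>n'\<in>{a l..<a (Suc l)}. \<epsilon> < norm (partial_sum x q' n' - partial_sum x t n)"
      using Q(4)[rule_format, OF imageI[OF n]] by auto
    have "partial_sum x t n' = partial_sum x q' n'" if "n' \<in> {a l..<a (Suc l)}" for n'
      using t that l(2) by (intro partial_sum_cong) (auto simp: cylinder_def)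
    then show "\<exists>l\<ge>K. \<forall>n'\<in>{a l..<a (Suc l)}. \<epsilon> < norm (partial_sum x t n' - partial_sum x t n)"
      using l(1,3) by auto
  qed
  then have "?W \<inter> ?C = {}"
    by blast
  ultimately show "\<exists>W. openin sign_space W \<and> W \<noteq> {} \<and> W \<subseteq> U \<and> W \<inter> ?C = {}"
    by (intro exI[of _ ?W]) (auto simp: sign_space_eq openin_cylinder)
qed

theorem theorem3p4:
  fixes x :: "nat \<Rightarrow> 'a::banach"
    and \<I> :: "nat set set"
  assumes "\<not> unconditionally_convergent x"
    and "is_ideal \<I>"
    and "ideal_has_Baire_property \<I>"
  shows "meager_in sign_space
           {t \<in> topspace sign_space. I_convergent_series \<I> (\<lambda>n. t n *\<^sub>R x n)}"
proof -
  obtain \<epsilon> where "\<epsilon> > 0" and blocks: "large_sign_blocks x \<epsilon>"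
    using large_sign_blocks_if_not_unconditionally_convergent[OF assms(1)] by blast
  obtain a where a: "strict_mono a"
    and intervals: "\<And>A. A \<in> \<I> \<Longrightarrow> finite {k. {a k..<a (Suc k)} \<subseteq> A}"
    using meager_hereditary_interval_partition[OF _ ideal_meager_in_cantor_space[OF assms(2,3)]]
      is_ideal_subset[OF assms(2)] by metis
  let ?C = "\<lambda>K. topspace sign_space \<inter> close_on_intervals x a (\<epsilon> / 3) K"
  have "t \<in> (\<Union>K. ?C K)"
    if t: "t \<in> topspace sign_space" and conv: "I_convergent_series \<I> (\<lambda>n. t n *\<^sub>R x n)" for t
  proof -
    obtain K where "t \<in> close_on_intervals x a (\<epsilon> / 3) K"
      using I_convergent_series_close_on_intervals[OF conv _ intervals, of "\<epsilon> / 3"] \<open>\<epsilon> > 0\<close>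
      by auto
    with t show ?thesis
      by blast
  qed
  then have "{t \<in> topspace sign_space. I_convergent_series \<I> (\<lambda>n. t n *\<^sub>R x n)} \<subseteq> (\<Union>K. ?C K)"
    by blast
  moreover have "nowhere_dense_in sign_space (?C K)" for K
    using nowhere_dense_close_on_intervals[OF blocks _ a] \<open>\<epsilon> > 0\<close> by simp
  ultimately show ?thesis
    unfolding meager_in_def by (intro conjI exI[of _ "range ?C"]) auto
qed

end
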